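(* Let $D$ be a strongly connected digraph with at least two vertices and let $T$ be a DFS tree of $D$ rooted at $r$. Let $x_1,\ldots,x_k$ be the out-neighbors of $r$ in $T$, and for each $i\in\{1,\ldots,k\}$ let $T_i$ be the subtree of $T$ consisting of $r$, the arc $(r,x_i)$ and all descendants of $x_i$ (so $T=\bigcup_i T_i$ and $V(T_i)\cap V(T_j)=\{r\}$ for $i\ne j$). For each $i$ let $G_{T_i}$ be the undirected graph with vertex set $V(T_i)$ in which $uv$ is an edge whenever $D$ has a backward arc between $u$ and $v$ (in either direction). Then $\chi_A(D)\le \max_{1\le i\le k}\chi(G_{T_i})$.
   Context: Digraphs are finite and loopless; paths and cycles are directed. $\chi$ is the usual chromatic number of an undirected graph; $\chi_A$ is the minimum number of colors in a vertex coloring of a digraph whose color classes all induce acyclic subdigraphs. A DFS tree $T$ of a strongly connected digraph $D$ rooted at $r$ is the spanning out-branching of $D$ produced by a depth-first search of $D$ started at $r$. A vertex $v$ is a descendant of $u$ if $T$ contains a directed $uv$-path. An arc $(u,v)$ of $D$ is a backward arc if $u$ is a descendant of $v$. *)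

theory Defs
  imports Main
begin

definition digraph :: "'a set \<Rightarrow> ('a \<times> 'a) set \<Rightarrow> bool" where
  "digraph V A \<longleftrightarrow> finite V \<and> A \<subseteq> V \<times> V \<and> (\<forall>v. (v, v) \<notin> A)"

definition strongly_connected :: "'a set \<Rightarrow> ('a \<times> 'a) set \<Rightarrow> bool" where
  "strongly_connected V A \<longleftrightarrow> (\<forall>u\<in>V. \<forall>v\<in>V. (u, v) \<in> A\<^sup>*)"

text \<open>Executions of a depth-first search of the digraph with arc set A started at r.
  State: stack (current path, top first), set of visited vertices, set of tree arcs.\<close>

inductive dfs_run :: "('a \<times> 'a) set \<Rightarrow> 'a \<Rightarrow> 'a list \<Rightarrow> 'a set \<Rightarrow> ('a \<times> 'a) set \<Rightarrow> bool"
  for A :: "('a \<times> 'a) set" and r :: 'a where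
  init: "dfs_run A r [r] {r} {}"
| advance: "dfs_run A r (u # s) vis T \<Longrightarrow> (u, v) \<in> A \<Longrightarrow> v \<notin> vis
            \<Longrightarrow> dfs_run A r (v # u # s) (insert v vis) (insert (u, v) T)"
| backtrack: "dfs_run A r (u # s) vis T \<Longrightarrow> (\<forall>v. (u, v) \<in> A \<longrightarrow> v \<in> vis)
            \<Longrightarrow> dfs_run A r s vis T"

text \<open>T (a set of arcs) is a DFS tree of D rooted at r: the tree produced by a
  completed depth-first search started at r.\<close>

definition dfs_tree :: "('a \<times> 'a) set \<Rightarrow> 'a \<Rightarrow> ('a \<times> 'a) set \<Rightarrow> bool" where
  "dfs_tree A r T \<longleftrightarrow> (\<exists>vis. dfs_run A r [] vis T)"

definition descendant :: "('a \<times> 'a) set \<Rightarrow> 'a \<Rightarrow> 'a \<Rightarrow> bool" where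
  "descendant T u v \<longleftrightarrow> (u, v) \<in> T\<^sup>*"

definition backward_arc :: "('a \<times> 'a) set \<Rightarrow> ('a \<times> 'a) set \<Rightarrow> 'a \<Rightarrow> 'a \<Rightarrow> bool" where
  "backward_arc A T u v \<longleftrightarrow> (u, v) \<in> A \<and> descendant T v u"

definition subtree_verts :: "('a \<times> 'a) set \<Rightarrow> 'a \<Rightarrow> 'a \<Rightarrow> 'a set" where
  "subtree_verts T r x = insert r {y. descendant T x y}"

definition chromatic_number :: "'a set \<Rightarrow> ('a \<Rightarrow> 'a \<Rightarrow> bool) \<Rightarrow> nat" where
  "chromatic_number W E = (LEAST k. \<exists>c :: 'a \<Rightarrow> nat.
      (\<forall>u\<in>W. c u < k) \<and> (\<forall>u\<in>W. \<forall>v\<in>W. E u v \<longrightarrow> c u \<noteq> c v))"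

definition back_graph :: "('a \<times> 'a) set \<Rightarrow> ('a \<times> 'a) set \<Rightarrow> 'a \<Rightarrow> 'a \<Rightarrow> bool" where
  "back_graph A T u v \<longleftrightarrow> backward_arc A T u v \<or> backward_arc A T v u"

definition dichromatic_number :: "'a set \<Rightarrow> ('a \<times> 'a) set \<Rightarrow> nat" where
  "dichromatic_number V A = (LEAST k. \<exists>c :: 'a \<Rightarrow> nat.
      (\<forall>v\<in>V. c v < k) \<and>
      (\<forall>i<k. acyclic (A \<inter> ({v\<in>V. c v = i} \<times> {v\<in>V. c v = i}))))"

end

theory Submission
  imports Defs
begin

text \<open>Every cycle of D contains a backward arc of the DFS tree T. This is an invariant of the
  search: an arc from a finished vertex to a vertex still on the stack is backward, so when a
  vertex u is finished, any arc entering u from an already finished vertex is backward; hence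
  among finished vertices, a cycle avoiding backward arcs would have to avoid u as well.
  Consequently a colouring of V in which the two ends of every backward arc get different
  colours is acyclic. Backward arcs join a vertex to one of its ancestors, so each of them lies
  inside a single subtree T_i; proper colourings of the graphs G_{T_i}, all giving r the
  colour 0, therefore glue to such a colouring with max_i \<chi>(G_{T_i}) colours.\<close>

lemma chromatic_number_colouring:
  assumes "finite W" and "\<forall>u\<in>W. \<not> E u u"
  shows "\<exists>c. (\<forall>u\<in>W. c u < chromatic_number W E) \<and> (\<forall>u\<in>W. \<forall>v\<in>W. E u v \<longrightarrow> c u \<noteq> c v)"
proof -
  obtain h where h: "bij_betw h W {0..<card W}" using ex_bij_betw_finite_nat[OF assms(1)] by blast
  then have "(\<forall>u\<in>W. h u < card W) \<and> (\<forall>u\<in>W. \<forall>v\<in>W. E u v \<longrightarrow> h u \<noteq> h v)"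
    using assms(2) unfolding bij_betw_def inj_on_def by auto
  then have "\<exists>k. \<exists>c :: 'a \<Rightarrow> nat. (\<forall>u\<in>W. c u < k) \<and> (\<forall>u\<in>W. \<forall>v\<in>W. E u v \<longrightarrow> c u \<noteq> c v)"
    by blast
  then show ?thesis unfolding chromatic_number_def by (rule LeastI_ex)
qed

lemma chromatic_number_colouring_fixing:
  assumes "finite W" and "\<forall>u\<in>W. \<not> E u u" and "r \<in> W"
  shows "\<exists>c. (\<forall>u\<in>W. c u < chromatic_number W E) \<and> (\<forall>u\<in>W. \<forall>v\<in>W. E u v \<longrightarrow> c u \<noteq> c v)
    \<and> c r = 0"
proof -
  obtain c where c: "\<forall>u\<in>W. c u < chromatic_number W E" "\<forall>u\<in>W. \<forall>v\<in>W. E u v \<longrightarrow> c u \<noteq> c v"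
    using chromatic_number_colouring[of W E] assms(1,2) by blast
  define swap where "swap i = (if i = c r then 0 else if i = 0 then c r else i)" for i :: nat
  have "inj swap" unfolding swap_def inj_def by auto
  then have "\<forall>u\<in>W. \<forall>v\<in>W. E u v \<longrightarrow> swap (c u) \<noteq> swap (c v)" using c(2) by (simp add: inj_eq)
  moreover have "\<forall>u\<in>W. swap (c u) < chromatic_number W E" using c(1) assms(3) by (force simp: swap_def)
  ultimately show ?thesis by (intro exI[of _ "swap \<circ> c"]) (simp add: swap_def)
qed

locale rooted_tree =
  fixes T :: "('a \<times> 'a) set" and r :: 'a
  assumes unique_parent: "(a, b) \<in> T \<Longrightarrow> (a', b) \<in> T \<Longrightarrow> a = a'"
    and root_no_parent: "(a, r) \<notin> T"

context rooted_tree
begin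

lemma ancestor_of_root: "(a, r) \<in> T\<^sup>* \<Longrightarrow> a = r"
  by (erule rtranclE) (auto simp: root_no_parent)

lemma ancestors_comparable: "(a, v) \<in> T\<^sup>* \<Longrightarrow> (b, v) \<in> T\<^sup>* \<Longrightarrow> (a, b) \<in> T\<^sup>* \<or> (b, a) \<in> T\<^sup>*"
proof (induction arbitrary: b rule: rtrancl_induct)
  case base
  then show ?case by simp
next
  case (step y z)
  from \<open>(b, z) \<in> T\<^sup>*\<close> show ?case
  proof (cases rule: rtranclE)
    case base
    then show ?thesis using step.hyps by (meson rtrancl_into_rtrancl)
  next
    case (step y')
    then have "y' = y" using unique_parent \<open>(y, z) \<in> T\<close> by blast
    then show ?thesis using step.IH \<open>(b, y') \<in> T\<^sup>*\<close> by blast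
  qed
qed

lemma child_of_root_unique:
  assumes "(r, x) \<in> T" "(r, x') \<in> T" "(x, v) \<in> T\<^sup>*" "(x', v) \<in> T\<^sup>*"
  shows "x = x'"
proof -
  have "x = x'" if "(r, x) \<in> T" "(r, x') \<in> T" "(x, x') \<in> T\<^sup>*" for x x'
    using that(3)
  proof (cases rule: rtranclE)
    case (step y)
    then have "y = r" using unique_parent that(2) by blast
    then have "x = r" using ancestor_of_root step(1) by blast
    then show ?thesis using that(1) root_no_parent by blast
  qed simp
  then show ?thesis using ancestors_comparable[OF assms(3,4)] assms(1,2) by metis
qed

definition branch :: "'a \<Rightarrow> 'a" where
  "branch v = (THE x. (r, x) \<in> T \<and> (x, v) \<in> T\<^sup>*)"

lemma branch_eqI: "(r, x) \<in> T \<Longrightarrow> (x, v) \<in> T\<^sup>* \<Longrightarrow> branch v = x"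
  unfolding branch_def by (rule the_equality) (auto intro: child_of_root_unique)

lemma branch:
  assumes "(r, v) \<in> T\<^sup>*" and "v \<noteq> r"
  shows "(r, branch v) \<in> T" and "(branch v, v) \<in> T\<^sup>*"
proof -
  obtain x where "(r, x) \<in> T" "(x, v) \<in> T\<^sup>*"
    using assms by (metis converse_rtranclE)
  then show "(r, branch v) \<in> T" and "(branch v, v) \<in> T\<^sup>*" using branch_eqI by simp_all
qed

lemma ancestor_in_branch_subtree:
  assumes "(r, v) \<in> T\<^sup>*" and "v \<noteq> r" and "(u, v) \<in> T\<^sup>*"
  shows "u \<in> subtree_verts T r (branch v)"
proof (cases "u = r")
  case False
  have "(r, u) \<in> T\<^sup>*" using assms(1,3) ancestors_comparable ancestor_of_root by metis
  then have "(branch u, v) \<in> T\<^sup>*" using branch(2)[OF _ False] assms(3) by (meson rtrancl_trans)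
  then have "branch v = branch u" using branch(1)[OF \<open>(r, u) \<in> T\<^sup>*\<close> False] by (rule branch_eqI[rotated])
  then show ?thesis using branch(2)[OF \<open>(r, u) \<in> T\<^sup>*\<close> False]
    by (simp add: subtree_verts_def descendant_def)
qed (simp add: subtree_verts_def)

lemma colouring_from_branches:
  assumes "finite V" and "T \<subseteq> V \<times> V" and reach: "\<And>v. v \<in> V \<Longrightarrow> (r, v) \<in> T\<^sup>*"
    and "\<exists>v\<in>V. v \<noteq> r" and irrefl: "\<forall>u. \<not> E u u"
    and comparable: "\<And>u v. E u v \<Longrightarrow> (u, v) \<in> T\<^sup>* \<or> (v, u) \<in> T\<^sup>*"
  shows "\<exists>c. (\<forall>v\<in>V. c v < Max ((\<lambda>x. chromatic_number (subtree_verts T r x) E) ` {x. (r, x) \<in> T}))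
    \<and> (\<forall>u\<in>V. \<forall>v\<in>V. E u v \<longrightarrow> c u \<noteq> c v)"
proof -
  define \<chi> where "\<chi> x = chromatic_number (subtree_verts T r x) E" for x
  define M where "M = Max (\<chi> ` {x. (r, x) \<in> T})"
  have "finite {x. (r, x) \<in> T}"
    using assms(1,2) by (blast intro: finite_subset)
  then have le_M: "\<chi> (branch v) \<le> M" if "v \<in> V" "v \<noteq> r" for v
    unfolding M_def using branch(1)[OF reach[OF that(1)] that(2)] by simp
  have "finite (subtree_verts T r x)" for x
  proof -
    have "subtree_verts T r x \<subseteq> insert r (insert x (Range T))"
      unfolding subtree_verts_def descendant_def by (auto elim: rtranclE)
    moreover have "finite (Range T)" using assms(1,2) by (blast intro: finite_subset)
    ultimately show ?thesis by (simp add: finite_subset)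
  qed
  then have "\<exists>c. (\<forall>u\<in>subtree_verts T r x. c u < \<chi> x)
      \<and> (\<forall>u\<in>subtree_verts T r x. \<forall>v\<in>subtree_verts T r x. E u v \<longrightarrow> c u \<noteq> c v) \<and> c r = 0" for x
    unfolding \<chi>_def using irrefl by (intro chromatic_number_colouring_fixing) (auto simp: subtree_verts_def)
  then obtain col where col_lt: "\<And>x u. u \<in> subtree_verts T r x \<Longrightarrow> col x u < \<chi> x"
    and col_proper: "\<And>x u v. u \<in> subtree_verts T r x \<Longrightarrow> v \<in> subtree_verts T r x \<Longrightarrow> E u v
      \<Longrightarrow> col x u \<noteq> col x v"
    and col_root: "\<And>x. col x r = 0"
    by metis
  \<comment> \<open>branch r is a junk value; harmless, as every col x gives r the colour 0\<close>
  define c where "c v = col (branch v) v" for v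
  have in_branch: "u \<in> subtree_verts T r (branch v)" if "v \<in> V" "v \<noteq> r" "(u, v) \<in> T\<^sup>*" for u v
    using ancestor_in_branch_subtree reach that by blast
  have c_eq: "c u = col (branch v) u" if "v \<in> V" "v \<noteq> r" "(u, v) \<in> T\<^sup>*" for u v
  proof (cases "u = r")
    case False
    then have "(branch v, u) \<in> T\<^sup>*"
      using in_branch[OF that] by (simp add: subtree_verts_def descendant_def)
    then have "branch u = branch v" using branch_eqI branch(1)[OF reach[OF that(1)] that(2)] by blast
    then show ?thesis by (simp add: c_def)
  qed (simp add: c_def col_root)
  have "c v < M" if "v \<in> V" for v
  proof (cases "v = r")
    case True
    obtain v' where "v' \<in> V" "v' \<noteq> r" using assms(4) by blast
    then show ?thesis using True le_M col_lt[of r "branch v'"] col_root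
      by (fastforce simp: c_def subtree_verts_def)
  next
    case False
    then show ?thesis using le_M[OF that False] col_lt in_branch[OF that False] c_def by fastforce
  qed
  moreover have "c u \<noteq> c v" if "u \<in> V" "v \<in> V" "E u v" for u v
  proof -
    have "c a \<noteq> c b" if "a \<in> V" "b \<in> V" "(a, b) \<in> T\<^sup>*" "E a b \<or> E b a" for a b
    proof -
      have "b \<noteq> r" using that(3,4) irrefl ancestor_of_root by blast
      then show ?thesis using col_proper[of a "branch b" b] col_proper[of b "branch b" a] that
          in_branch[OF that(2)] c_eq[OF that(2)] by fastforce
    qed
    then show ?thesis using comparable[OF that(3)] that by metis
  qed
  ultimately show ?thesis unfolding M_def \<chi>_def by blast
qed

end

lemma acyclic_extend_by_source:
  assumes "acyclic R" and "R' \<subseteq> R \<union> {u} \<times> UNIV \<union> UNIV \<times> {u}" and "u \<notin> Range R'"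
  shows "acyclic R'"
proof -
  have avoid_u: "(x, y) \<in> R\<^sup>+" if "(x, y) \<in> R'\<^sup>+" and "x \<noteq> u" for x y
    using that
  proof (induction rule: trancl_induct)
    case (base y)
    then show ?case using assms(2,3) by blast
  next
    case (step y z)
    have "y \<noteq> u" using step.hyps(1) assms(3) by (auto dest: tranclD2)
    then have "(y, z) \<in> R" using step.hyps(2) assms(2,3) by blast
    then show ?case using step.IH step.prems by (meson trancl_into_trancl)
  qed
  show ?thesis
    unfolding acyclic_def
  proof (intro allI notI)
    fix x assume cycle: "(x, x) \<in> R'\<^sup>+"
    then have "x \<noteq> u" using assms(3) by (auto dest: tranclD2)
    then show False using avoid_u cycle assms(1) unfolding acyclic_def by blast
  qed
qed

lemma backward_arc_mono: "backward_arc A T a b \<Longrightarrow> T \<subseteq> T' \<Longrightarrow> backward_arc A T' a b"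
  unfolding backward_arc_def descendant_def by (meson rtrancl_mono subsetD)

lemma dfs_run_visited:
  assumes "dfs_run A r s vis T"
  shows "r \<in> vis \<and> set s \<subseteq> vis \<and> vis \<subseteq> insert r (Range A) \<and> T \<subseteq> A \<inter> vis \<times> vis"
  using assms by (induction rule: dfs_run.induct) auto

lemma dfs_run_reaches: "dfs_run A r s vis T \<Longrightarrow> w \<in> vis \<Longrightarrow> (r, w) \<in> T\<^sup>*"
proof (induction arbitrary: w rule: dfs_run.induct)
  case init
  then show ?case by simp
next
  case (advance u s vis T v)
  have mono: "T\<^sup>* \<subseteq> (insert (u, v) T)\<^sup>*" by (rule rtrancl_mono) blast
  have "(r, u) \<in> T\<^sup>*" using advance.IH dfs_run_visited[OF advance.hyps(1)] by simp
  then have "(r, v) \<in> (insert (u, v) T)\<^sup>*" using mono by (meson insertI1 rtrancl_into_rtrancl subsetD)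
  then show ?case using advance.prems advance.IH mono by blast
next
  case (backtrack u s vis T)
  then show ?case by blast
qed

lemma dfs_run_rooted_tree:
  assumes "dfs_run A r s vis T"
  shows "rooted_tree T r"
proof -
  have "(\<forall>a b a'. (a, b) \<in> T \<longrightarrow> (a', b) \<in> T \<longrightarrow> a = a') \<and> (\<forall>a. (a, r) \<notin> T)"
    using assms
  proof (induction rule: dfs_run.induct)
    case (advance u s vis T v)
    then show ?case using dfs_run_visited[OF advance.hyps(1)] by blast
  qed auto
  then show ?thesis by unfold_locales blast+
qed

lemma dfs_run_stack_ancestors: "dfs_run A r s vis T \<Longrightarrow> sorted_wrt (\<lambda>u w. (w, u) \<in> T\<^sup>*) s"
proof (induction rule: dfs_run.induct)
  case init
  then show ?case by simp
next
  case (advance u s vis T v)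
  let ?T = "insert (u, v) T"
  have sorted: "sorted_wrt (\<lambda>u w. (w, u) \<in> ?T\<^sup>*) (u # s)"
    using advance.IH by (rule sorted_wrt_mono_rel[rotated]) (meson rtrancl_mono subset_insertI subsetD)
  have "(w, v) \<in> ?T\<^sup>*" if "w \<in> set (u # s)" for w
  proof -
    have "(w, u) \<in> ?T\<^sup>*" using that sorted by auto
    then show ?thesis by (meson insertI1 rtrancl_into_rtrancl)
  qed
  then show ?case using sorted by simp
next
  case (backtrack u s vis T)
  then show ?case by simp
qed

lemma dfs_run_finished_closed:
  "dfs_run A r s vis T \<Longrightarrow> z \<in> vis - set s \<Longrightarrow> (z, y) \<in> A \<Longrightarrow> y \<in> vis"
  by (induction rule: dfs_run.induct) auto

lemma dfs_run_finished_to_stack_backward: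
  "dfs_run A r s vis T \<Longrightarrow> z \<in> vis - set s \<Longrightarrow> w \<in> set s \<Longrightarrow> (z, w) \<in> A
    \<Longrightarrow> backward_arc A T z w"
proof (induction rule: dfs_run.induct)
  case init
  then show ?case by simp
next
  case (advance u s vis T v)
  have z: "z \<in> vis - set (u # s)" using advance.prems(1) by simp
  then have "w \<in> vis" using dfs_run_finished_closed[OF advance.hyps(1)] advance.prems(3) by blast
  then have "w \<in> set (u # s)" using advance.hyps(3) advance.prems(2) by auto
  then have "backward_arc A T z w" using advance.IH z advance.prems(3) by blast
  then show ?case by (rule backward_arc_mono) blast
next
  case (backtrack u s vis T)
  show ?case
  proof (cases "z = u")
    case True
    then show ?thesis using dfs_run_stack_ancestors[OF backtrack.hyps(1)] backtrack.prems
      by (simp add: backward_arc_def descendant_def)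
  next
    case False
    then show ?thesis using backtrack by simp
  qed
qed

lemma dfs_run_finished_acyclic:
  assumes "dfs_run A r s vis T" and "\<forall>a\<in>S. \<forall>b\<in>S. \<not> backward_arc A T a b"
  shows "acyclic (A \<inter> ((vis - set s) \<inter> S) \<times> ((vis - set s) \<inter> S))"
  using assms
proof (induction rule: dfs_run.induct)
  case init
  then show ?case by (simp add: acyclic_def)
next
  case (advance u s vis T v)
  have "\<forall>a\<in>S. \<forall>b\<in>S. \<not> backward_arc A T a b"
    using advance.prems by (meson backward_arc_mono subset_insertI)
  then have "acyclic (A \<inter> ((vis - set (u # s)) \<inter> S) \<times> ((vis - set (u # s)) \<inter> S))"
    by (rule advance.IH)
  moreover have "insert v vis - set (v # u # s) = vis - set (u # s)" using advance.hyps(3) by auto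
  ultimately show ?case by simp
next
  case (backtrack u s vis T)
  define F where "F = (vis - set (u # s)) \<inter> S"
  define F' where "F' = (vis - set s) \<inter> S"
  have "acyclic (A \<inter> F \<times> F)" unfolding F_def using backtrack.prems by (rule backtrack.IH)
  moreover have "A \<inter> F' \<times> F' \<subseteq> A \<inter> F \<times> F \<union> {u} \<times> UNIV \<union> UNIV \<times> {u}" by (auto simp: F_def F'_def)
  moreover have "u \<notin> Range (A \<inter> F' \<times> F')"
  proof
    assume "u \<in> Range (A \<inter> F' \<times> F')"
    then obtain z where zu: "(z, u) \<in> A" and "z \<in> F'" "u \<in> F'" by blast
    then have S: "z \<in> S" "u \<in> S" and "z \<in> vis - set s" by (auto simp: F'_def)
    have "backward_arc A T z u"
    proof (cases "z = u")
      case True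
      then show ?thesis using zu by (simp add: backward_arc_def descendant_def)
    next
      case False
      then have "z \<in> vis - set (u # s)" using \<open>z \<in> vis - set s\<close> by simp
      then show ?thesis using dfs_run_finished_to_stack_backward[OF backtrack.hyps(1)] zu by simp
    qed
    then show False using backtrack.prems S by blast
  qed
  ultimately show ?case unfolding F'_def[symmetric] by (rule acyclic_extend_by_source)
qed

lemma dfs_run_visits_all:
  assumes "digraph V A" and "strongly_connected V A" and "r \<in> V" and "dfs_run A r [] vis T"
  shows "vis = V"
proof
  show "vis \<subseteq> V" using dfs_run_visited[OF assms(4)] assms(1,3) unfolding digraph_def by blast
  show "V \<subseteq> vis"
  proof
    fix v assume "v \<in> V"
    then have "(r, v) \<in> A\<^sup>*" using assms(2,3) unfolding strongly_connected_def by blast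
    then show "v \<in> vis"
    proof (induction rule: rtrancl_induct)
      case base
      show ?case using dfs_run_visited[OF assms(4)] by blast
    next
      case (step y z)
      then show ?case using dfs_run_finished_closed[OF assms(4)] by simp
    qed
  qed
qed

theorem mainTheorem6:
  fixes V :: "'a set" and A :: "('a \<times> 'a) set" and T :: "('a \<times> 'a) set" and r :: 'a
  assumes "digraph V A"
    and "strongly_connected V A"
    and "card V \<ge> 2"
    and "r \<in> V"
    and "dfs_tree A r T"
  shows "dichromatic_number V A
    \<le> Max ((\<lambda>x. chromatic_number (subtree_verts T r x) (back_graph A T)) ` {x. (r, x) \<in> T})"
    (is "_ \<le> ?M")
proof -
  obtain vis where run: "dfs_run A r [] vis T" using assms(5) unfolding dfs_tree_def by blast
  have vis: "vis = V" using dfs_run_visits_all[OF assms(1,2,4) run] .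
  interpret rooted_tree T r using dfs_run_rooted_tree[OF run] .
  have "\<exists>v\<in>V. v \<noteq> r"
  proof (rule ccontr)
    assume "\<not> (\<exists>v\<in>V. v \<noteq> r)"
    then have "card V \<le> card {r}" by (intro card_mono) auto
    then show False using assms(3) by simp
  qed
  moreover have "\<forall>u. \<not> back_graph A T u u"
    using assms(1) by (simp add: digraph_def back_graph_def backward_arc_def)
  ultimately obtain c where c_lt: "\<forall>v\<in>V. c v < ?M"
    and c_proper: "\<forall>u\<in>V. \<forall>v\<in>V. back_graph A T u v \<longrightarrow> c u \<noteq> c v"
    using colouring_from_branches[of V "back_graph A T"] assms(1) dfs_run_visited[OF run]
      dfs_run_reaches[OF run] unfolding vis
    by (auto simp: digraph_def back_graph_def backward_arc_def descendant_def)
  have "acyclic (A \<inter> {v\<in>V. c v = i} \<times> {v\<in>V. c v = i})" for i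
  proof -
    have "\<forall>a\<in>{v\<in>V. c v = i}. \<forall>b\<in>{v\<in>V. c v = i}. \<not> backward_arc A T a b"
      using c_proper unfolding back_graph_def by auto
    from dfs_run_finished_acyclic[OF run this] show ?thesis unfolding vis by (simp add: Int_absorb1)
  qed
  then show ?thesis unfolding dichromatic_number_def by (intro Least_le) (use c_lt in blast)
qed

end
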